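(* Let $T=[(\texttt{@}\texttt{\$},1),(\sigma_1,p_1),\dots,(\sigma_{k-1},p_{k-1})]$ be a sequence of pairs with $k\ge2$, each $\sigma_d$ ($d\ge1$) a non-empty string over $\Sigma$ and each $p_d$ a non-negative integer. For $1\le d\le k-2$ write $a_d=\sigma_d[1]$ and $c_d=\sigma_d[|\sigma_d|]$. Then $T=\mathcal{F}(s)$ for some $s\in\Sigma^*$ if and only if: (1) for each $1\le d\le k-2$: $p_d\ge1$ and $|\sigma_d|-p_d\ge1$, the front $\sigma_d[1..p_d]$ is a single run of $a_d$, and the back $\sigma_d[p_d+1..|\sigma_d|]$ is a single run of $c_d$; (2) $p_{k-1}=0$ and $\sigma_{k-1}$ is either a single run $a^m$ or two adjacent runs $a^\ell c^b$ with $a\ne c$; (3) if $k\ge3$: for $1\le d\le k-3$, $a_{d+1}\ne a_d$ and $c_{d+1}\ne c_d$; and the first character of $\sigma_{k-1}$ differs from $a_{k-2}$ and the last character of $\sigma_{k-1}$ differs from $c_{k-2}$. (When $k=2$ only (1) and (2) apply.) Moreover, $\mathcal{F}(\mathcal{F}^{-1}(T))=T$ for every $T$ satisfying these conditions.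
   Context: Let $\Sigma$ be an alphabet and $\texttt{@},\texttt{\$}$ two distinct symbols not in $\Sigma$. For $s\in\Sigma^*$ with $|s|=n$ let $\hat s=\texttt{@}\,s\,\texttt{\$}$ (positions $1,\dots,n+2$); $\hat s[i..j)$ is the substring at positions $i,\dots,j-1$. A single run of $a$ is a string $a^m$, $m\ge1$. The leading (trailing) run of a non-empty string is its longest prefix (suffix) consisting of one repeated symbol. The Flashback decomposition $\mathcal{F}(s)$ is the sequence of tokens $(\sigma,p)$ produced as follows, starting from active span $[lo,hi)=[1,n+3)$: if $lo\ge hi$, stop. Let $\ell$ be the leading-run length of $\hat s[lo..hi)$. If $\ell=hi-lo$, append $(\hat s[lo..hi),0)$ and stop. Otherwise let $\hat s[r..hi)$ be the trailing run of $\hat s[lo..hi)$ and $\sigma=\hat s[lo..lo+\ell)\cdot\hat s[r..hi)$; if $lo+\ell\ge r$, append $(\sigma,0)$ and stop; otherwise append $(\sigma,\ell)$ and repeat with $[lo+\ell,r)$. For $T=[(\sigma_0,p_0),\dots,(\sigma_{k-1},p_{k-1})]$ define $N_{k-1}=\sigma_{k-1}$ and $N_i=\sigma_i[1..p_i]\cdot N_{i+1}\cdot\sigma_i[p_i+1..|\sigma_i|]$ for $i<k-1$; $\mathcal{F}^{-1}(T)$ is $N_0$ with its first and last characters removed. *)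

theory Defs
  imports Main
begin

datatype 'a sym = At | Dollar | Ch 'a

definition lead_len :: "'b list \<Rightarrow> nat" where
  "lead_len w = length (takeWhile (\<lambda>x. x = hd w) w)"

definition trail_len :: "'b list \<Rightarrow> nat" where
  "trail_len w = lead_len (rev w)"

lemma lead_len_pos: "w \<noteq> [] \<Longrightarrow> lead_len w \<ge> 1"
  by (cases w) (auto simp: lead_len_def)

text \<open>The Flashback process run on an active span w = s-hat[lo..hi).\<close>
function flash :: "'b list \<Rightarrow> ('b list \<times> nat) list" where
  "flash w =
    (if w = [] then []
     else let l = lead_len w in
       if l = length w then [(w, 0)]
       else let r = length w - trail_len w; \<sigma> = take l w @ drop r w in
         if l \<ge> r then [(\<sigma>, 0)]
         else (\<sigma>, l) # flash (drop l (take r w)))"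
  by pat_completeness auto
termination
proof (relation "measure length")
  fix w :: "'b list" and l r
  assume "w \<noteq> []" "l = lead_len w" "r = length w - trail_len w" "\<not> r \<le> l"
  then show "(drop l (take r w), w) \<in> measure length"
    using lead_len_pos[of w] by auto
qed simp

definition hat :: "'a list \<Rightarrow> 'a sym list" where
  "hat s = At # map Ch s @ [Dollar]"

definition Flashback :: "'a list \<Rightarrow> ('a sym list \<times> nat) list" where
  "Flashback s = flash (hat s)"

fun nest :: "('b list \<times> nat) list \<Rightarrow> 'b list" where
  "nest [] = []"
| "nest [(\<sigma>, p)] = \<sigma>"
| "nest ((\<sigma>, p) # rest) = take p \<sigma> @ nest rest @ drop p \<sigma>"

definition Flashback_inv :: "('b list \<times> nat) list \<Rightarrow> 'b list" where
  "Flashback_inv T = butlast (tl (nest T))"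

definition single_run :: "'b \<Rightarrow> 'b list \<Rightarrow> bool" where
  "single_run a x \<longleftrightarrow> x \<noteq> [] \<and> (\<forall>y\<in>set x. y = a)"

end

theory Submission
  imports Defs
begin

text \<open>Each Flashback step strips the leading run \<open>a\<^sup>l\<close> and the trailing run \<open>c\<^sup>t\<close> off the
  active span and emits the token \<open>(a\<^sup>l c\<^sup>t, l)\<close>. The letters next to the stripped runs differ
  from \<open>a\<close> and \<open>c\<close>, and they are the first and last letters of the next span, hence of the
  next token: this is conditions (1) and (3). The process stops when the two runs cover the
  span, leaving one run or two runs, which is condition (2). Conversely, nesting a token list
  with these properties yields a string \<open>a\<^sup>p N c\<^sup>q\<close> in which \<open>a\<^sup>p\<close> and \<open>c\<^sup>q\<close> are maximal runs,
  so Flashback peels off exactly the given tokens again.\<close>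

declare flash.simps [simp del]

lemma lead_len_replicate_append:
  assumes "n \<ge> 1" "u = [] \<or> hd u \<noteq> a"
  shows "lead_len (replicate n a @ u) = n"
proof -
  have "hd (replicate n a @ u) = a" using assms(1) by (cases n) auto
  moreover have "takeWhile (\<lambda>x. x = a) (replicate n a @ u) = replicate n a"
  proof -
    have "takeWhile (\<lambda>x. x = a) u = []" using assms(2) by (cases u) auto
    then show ?thesis by (subst takeWhile_append2) auto
  qed
  ultimately show ?thesis by (simp add: lead_len_def)
qed

lemma trail_len_append_replicate:
  assumes "n \<ge> 1" "u = [] \<or> last u \<noteq> a"
  shows "trail_len (u @ replicate n a) = n"
  using lead_len_replicate_append[OF assms(1), of "rev u" a] assms(2)
  by (auto simp: trail_len_def hd_rev)

lemma take_lead_len: "take (lead_len w) w = replicate (lead_len w) (hd w)"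
proof -
  have "\<forall>x\<in>set (takeWhile (\<lambda>x. x = hd w) w). x = hd w" by (auto dest: set_takeWhileD)
  then show ?thesis
    unfolding lead_len_def by (metis replicate_length_same takeWhile_eq_take)
qed

lemma hd_drop_lead_len: "drop (lead_len w) w \<noteq> [] \<Longrightarrow> hd (drop (lead_len w) w) \<noteq> hd w"
  using hd_dropWhile[of "\<lambda>x. x = hd w" w] by (simp add: lead_len_def dropWhile_eq_drop)

lemma trail_len_le_length: "trail_len w \<le> length w"
  using length_takeWhile_le[of _ "rev w"] by (simp add: trail_len_def lead_len_def)

lemma drop_trail_len:
  "drop (length w - trail_len w) w = replicate (trail_len w) (last w)"
  using take_lead_len[of "rev w"] trail_len_le_length[of w]
  by (metis hd_rev length_rev rev_replicate rev_rev_ident rev_take trail_len_def diff_diff_cancel)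

lemma last_take_trail_len:
  assumes "take (length w - trail_len w) w \<noteq> []"
  shows "last (take (length w - trail_len w) w) \<noteq> last w"
proof -
  have "take (length w - trail_len w) w = rev (drop (lead_len (rev w)) (rev w))"
    by (simp add: trail_len_def rev_drop)
  then show ?thesis using assms hd_drop_lead_len[of "rev w"] by (simp add: last_rev hd_rev)
qed

lemma run_shapes:
  assumes "w \<noteq> []"
  obtains (one_run) a n where "n \<ge> 1" "w = replicate n a"
  | (two_runs) a c m n where "a \<noteq> c" "m \<ge> 1" "n \<ge> 1" "w = replicate m a @ replicate n c"
  | (wrapped) a c m n u where "m \<ge> 1" "n \<ge> 1" "u \<noteq> []" "hd u \<noteq> a" "last u \<noteq> c"
      "w = replicate m a @ u @ replicate n c"
proof -
  define l t where "l = lead_len w" and "t = trail_len w"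
  define r where "r = length w - t"
  have l: "l \<ge> 1" "take l w = replicate l (hd w)"
    using lead_len_pos[OF assms] take_lead_len[of w] by (simp_all add: l_def)
  have t: "t \<ge> 1" "drop r w = replicate t (last w)"
    using lead_len_pos[of "rev w"] drop_trail_len[of w] assms by (simp_all add: t_def r_def trail_len_def)
  show thesis
  proof (cases "drop l w = []")
    case True
    then have "w = replicate l (hd w)" using l(2) by (metis append_Nil2 append_take_drop_id)
    with l(1) show thesis by (rule one_run)
  next
    case False
    have hd_rest: "hd (drop l w) \<noteq> hd w" using False hd_drop_lead_len by (simp add: l_def)
    show thesis
    proof (cases "r \<le> l")
      case True
      have "drop l w = replicate (length w - l) (last w)"
        using t(2) True by (metis diff_add drop_drop drop_replicate length_drop length_replicate)
      moreover from this False hd_rest have "hd w \<noteq> last w" by (cases "length w - l") auto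
      moreover have "w = take l w @ drop l w" by simp
      ultimately show thesis using l False by (intro two_runs[of "hd w" "last w" l "length w - l"]) auto
    next
      case False
      define u where "u = drop l (take r w)"
      have "w = take l w @ u @ drop r w"
        using False unfolding u_def
        by (metis append.assoc append_take_drop_id drop_take le_add_diff_inverse linorder_linear take_add)
      moreover have "u \<noteq> []" "hd u \<noteq> hd w"
        using False hd_rest by (auto simp: u_def r_def hd_drop_conv_nth)
      moreover have "last u \<noteq> last w"
        using False assms last_take_trail_len[of w] by (auto simp: u_def r_def t_def)
      ultimately show thesis using l t by (intro wrapped) simp_all
    qed
  qed
qed

lemma flash_replicate:
  assumes "n \<ge> 1"
  shows "flash (replicate n a) = [(replicate n a, 0)]"
  using assms lead_len_replicate_append[OF assms, of "[]" a] by (simp add: flash.simps)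

lemma flash_two_runs:
  assumes "a \<noteq> c" "m \<ge> 1" "n \<ge> 1"
  shows "flash (replicate m a @ replicate n c) = [(replicate m a @ replicate n c, 0)]"
proof -
  have "lead_len (replicate m a @ replicate n c) = m"
    using assms by (intro lead_len_replicate_append) (auto simp: hd_replicate)
  moreover have "trail_len (replicate m a @ replicate n c) = n"
    using assms by (intro trail_len_append_replicate) (auto simp: last_replicate)
  ultimately show ?thesis using assms by (simp add: flash.simps Let_def)
qed

lemma flash_wrap:
  assumes "m \<ge> 1" "n \<ge> 1" "u \<noteq> []" "hd u \<noteq> a" "last u \<noteq> c"
  shows "flash (replicate m a @ u @ replicate n c) = (replicate m a @ replicate n c, m) # flash u"
proof -
  let ?w = "replicate m a @ u @ replicate n c"
  have "lead_len ?w = m"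
    using assms by (intro lead_len_replicate_append) auto
  moreover have "trail_len ?w = n"
    using trail_len_append_replicate[of n "replicate m a @ u" c] assms by simp
  ultimately show ?thesis using assms by (simp add: flash.simps[of ?w] Let_def)
qed

lemma flash_first_token:
  assumes "w \<noteq> []"
  obtains \<sigma> p ts where "flash w = (\<sigma>, p) # ts" "hd \<sigma> = hd w" "last \<sigma> = last w"
  using assms
proof (cases rule: run_shapes)
  case (one_run a n)
  then show thesis using that flash_replicate[of n a] by auto
next
  case (two_runs a c m n)
  then show thesis using that flash_two_runs[of a c m n] by auto
next
  case (wrapped a c m n u)
  then show thesis using that flash_wrap[of m n u a c] by auto
qed

text \<open>\<open>token_link t t'\<close> is conditions (1) and (3) for a token \<open>t\<close> and its successor \<open>t'\<close>;
  \<open>final_token\<close> is condition (2).\<close>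

fun token_link :: "'b list \<times> nat \<Rightarrow> 'b list \<times> nat \<Rightarrow> bool" where
  "token_link (\<sigma>, p) (\<sigma>', _) \<longleftrightarrow> p \<ge> 1 \<and> length \<sigma> - p \<ge> 1 \<and>
     single_run (hd \<sigma>) (take p \<sigma>) \<and> single_run (last \<sigma>) (drop p \<sigma>) \<and>
     hd \<sigma>' \<noteq> hd \<sigma> \<and> last \<sigma>' \<noteq> last \<sigma>"

fun final_token :: "'b list \<times> nat \<Rightarrow> bool" where
  "final_token (\<sigma>, p) \<longleftrightarrow> p = 0 \<and> ((\<exists>a. single_run a \<sigma>) \<or>
     (\<exists>a c x y. a \<noteq> c \<and> single_run a x \<and> single_run c y \<and> \<sigma> = x @ y))"

fun valid_tokens :: "('b list \<times> nat) list \<Rightarrow> bool" where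
  "valid_tokens [] \<longleftrightarrow> False"
| "valid_tokens [t] \<longleftrightarrow> final_token t"
| "valid_tokens (t # t' # ts) \<longleftrightarrow> token_link t t' \<and> valid_tokens (t' # ts)"

lemma single_run_conv_replicate: "single_run a x \<longleftrightarrow> x \<noteq> [] \<and> x = replicate (length x) a"
  unfolding single_run_def by (metis in_set_replicate replicate_length_same)

lemma single_run_iff_replicate: "single_run a x \<longleftrightarrow> (\<exists>n \<ge> 1. x = replicate n a)"
  unfolding single_run_def
  by (metis in_set_replicate length_0_conv less_one not_le replicate_length_same)

lemma token_link_iff:
  "token_link (\<sigma>, p) (\<sigma>', p') \<longleftrightarrow>
     (\<exists>a c q. p \<ge> 1 \<and> q \<ge> 1 \<and> \<sigma> = replicate p a @ replicate q c \<and> hd \<sigma>' \<noteq> a \<and> last \<sigma>' \<noteq> c)"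
  (is "?lhs \<longleftrightarrow> ?rhs")
proof
  assume ?lhs
  then have "p \<ge> 1" "length \<sigma> - p \<ge> 1" "take p \<sigma> = replicate p (hd \<sigma>)"
    "drop p \<sigma> = replicate (length \<sigma> - p) (last \<sigma>)" "hd \<sigma>' \<noteq> hd \<sigma>" "last \<sigma>' \<noteq> last \<sigma>"
    by (auto simp: single_run_conv_replicate min_def)
  then show ?rhs by (metis append_take_drop_id)
next
  assume ?rhs
  then obtain a c q where "p \<ge> 1" "q \<ge> 1" "\<sigma> = replicate p a @ replicate q c" "hd \<sigma>' \<noteq> a" "last \<sigma>' \<noteq> c"
    by blast
  then show ?lhs by (cases p; cases q) (auto simp: single_run_def)
qed

lemma final_token_iff:
  "final_token (\<sigma>, p) \<longleftrightarrow> p = 0 \<and> ((\<exists>a n. n \<ge> 1 \<and> \<sigma> = replicate n a) \<or>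
     (\<exists>a c m n. a \<noteq> c \<and> m \<ge> 1 \<and> n \<ge> 1 \<and> \<sigma> = replicate m a @ replicate n c))"
proof -
  have "(\<exists>a c x y. a \<noteq> c \<and> single_run a x \<and> single_run c y \<and> \<sigma> = x @ y) \<longleftrightarrow>
      (\<exists>a c m n. a \<noteq> c \<and> m \<ge> 1 \<and> n \<ge> 1 \<and> \<sigma> = replicate m a @ replicate n c)"
    by (simp add: single_run_iff_replicate) blast
  then show ?thesis by (simp add: single_run_iff_replicate)
qed

declare token_link.simps [simp del] final_token.simps [simp del]

lemma valid_tokens_flash: "w \<noteq> [] \<Longrightarrow> valid_tokens (flash w)"
proof (induction w rule: length_induct)
  case (1 w)
  from \<open>w \<noteq> []\<close> show ?case
  proof (cases rule: run_shapes)
    case (one_run a n)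
    then show ?thesis by (auto simp: flash_replicate final_token_iff)
  next
    case (two_runs a c m n)
    then show ?thesis by (simp add: flash_two_runs final_token_iff) blast
  next
    case (wrapped a c m n u)
    obtain \<sigma> p ts where u: "flash u = (\<sigma>, p) # ts" "hd \<sigma> = hd u" "last \<sigma> = last u"
      using flash_first_token[OF \<open>u \<noteq> []\<close>] .
    have "valid_tokens (flash u)" using 1 wrapped by simp
    moreover have "token_link (replicate m a @ replicate n c, m) (\<sigma>, p)"
      using wrapped u by (auto simp: token_link_iff)
    ultimately show ?thesis using wrapped u by (simp add: flash_wrap)
  qed
qed

lemma nest_ends:
  "valid_tokens ts \<Longrightarrow>
     nest ts \<noteq> [] \<and> hd (nest ts) = hd (fst (hd ts)) \<and> last (nest ts) = last (fst (hd ts))"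
proof (induction ts rule: valid_tokens.induct)
  case (2 t)
  then show ?case by (cases t) (auto simp: final_token_iff)
next
  case (3 t t' ts)
  obtain \<sigma> p where t: "t = (\<sigma>, p)" by fastforce
  with 3 obtain a c q where "p \<ge> 1" "q \<ge> 1" "\<sigma> = replicate p a @ replicate q c"
    by (cases t') (auto simp: token_link_iff)
  with 3 t show ?case by (cases p; cases q) auto
qed simp

lemma flash_nest: "valid_tokens ts \<Longrightarrow> flash (nest ts) = ts"
proof (induction ts rule: valid_tokens.induct)
  case (2 t)
  then show ?case by (cases t) (auto simp: final_token_iff flash_replicate flash_two_runs)
next
  case (3 t t' ts)
  obtain \<sigma> p where t: "t = (\<sigma>, p)" by fastforce
  obtain \<sigma>' p' where t': "t' = (\<sigma>', p')" by fastforce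
  from 3 t t' obtain a c q where acq: "p \<ge> 1" "q \<ge> 1" "\<sigma> = replicate p a @ replicate q c"
    "hd \<sigma>' \<noteq> a" "last \<sigma>' \<noteq> c"
    by (auto simp: token_link_iff)
  have "nest (t # t' # ts) = replicate p a @ nest (t' # ts) @ replicate q c"
    using t acq by simp
  moreover have "nest (t' # ts) \<noteq> []" "hd (nest (t' # ts)) \<noteq> a" "last (nest (t' # ts)) \<noteq> c"
    using nest_ends[of "t' # ts"] 3 t' acq by auto
  ultimately show ?case using 3 t acq by (simp add: flash_wrap)
qed simp

lemma valid_tokens_map_upt:
  assumes "m < n"
  shows "valid_tokens (map g [m..<n]) \<longleftrightarrow>
    (\<forall>d. m \<le> d \<and> Suc d < n \<longrightarrow> token_link (g d) (g (Suc d))) \<and> final_token (g (n - 1))"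
proof -
  have "m \<le> n - 1" using assms by simp
  then show ?thesis
  proof (induction m rule: inc_induct)
    case base
    have "[n - 1..<n] = [n - 1]" using assms by (simp add: upt_rec)
    then show ?case by auto
  next
    case (step m)
    have "valid_tokens (map g [m..<n]) \<longleftrightarrow>
        token_link (g m) (g (Suc m)) \<and> valid_tokens (map g [Suc m..<n])"
      using step by (simp add: upt_conv_Cons)
    moreover have "(\<forall>d. m \<le> d \<and> Suc d < n \<longrightarrow> token_link (g d) (g (Suc d))) \<longleftrightarrow>
        token_link (g m) (g (Suc m)) \<and>
        (\<forall>d. Suc m \<le> d \<and> Suc d < n \<longrightarrow> token_link (g d) (g (Suc d)))"
      using step by (auto simp: Suc_le_eq dest: le_neq_implies_less)
    ultimately show ?case using step.IH by simp
  qed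
qed

lemma single_run_map_iff:
  assumes "inj f"
  shows "single_run b (map f x) \<longleftrightarrow> (\<exists>a. b = f a \<and> single_run a x)"
  using assms by (cases x) (auto simp: single_run_def inj_eq)

lemma token_link_map:
  assumes "inj f" "x \<noteq> []" "y \<noteq> []"
  shows "token_link (map f x, p) (map f y, q) \<longleftrightarrow> token_link (x, p) (y, q)"
  using assms
  by (simp add: token_link.simps hd_map last_map take_map drop_map single_run_map_iff inj_eq)

lemma final_token_map:
  assumes "inj f"
  shows "final_token (map f \<sigma>, p) \<longleftrightarrow> final_token (\<sigma>, p)"
proof -
  have run: "single_run (f a) (map f x) \<longleftrightarrow> single_run a x" for a x
    using assms by (simp add: single_run_map_iff inj_eq)
  have "(\<exists>a c x y. a \<noteq> c \<and> single_run a x \<and> single_run c y \<and> map f \<sigma> = x @ y) \<longleftrightarrow>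
        (\<exists>a c x y. a \<noteq> c \<and> single_run a x \<and> single_run c y \<and> \<sigma> = x @ y)"
  proof
    assume "\<exists>a c x y. a \<noteq> c \<and> single_run a x \<and> single_run c y \<and> map f \<sigma> = x @ y"
    then obtain a c x y where "a \<noteq> c" "single_run a (map f x)" "single_run c (map f y)" "\<sigma> = x @ y"
      by (auto simp: map_eq_append_conv)
    then show "\<exists>a c x y. a \<noteq> c \<and> single_run a x \<and> single_run c y \<and> \<sigma> = x @ y"
      using assms by (auto simp: single_run_map_iff) metis
  next
    assume "\<exists>a c x y. a \<noteq> c \<and> single_run a x \<and> single_run c y \<and> \<sigma> = x @ y"
    then show "\<exists>a c x y. a \<noteq> c \<and> single_run a x \<and> single_run c y \<and> map f \<sigma> = x @ y"
      using assms run by (metis inj_eq map_append)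
  qed
  moreover have "(\<exists>a. single_run a (map f \<sigma>)) \<longleftrightarrow> (\<exists>a. single_run a \<sigma>)"
    using assms by (auto simp: single_run_map_iff)
  ultimately show ?thesis by (simp add: final_token.simps)
qed

lemma Flashback_Nil: "Flashback [] = [([At, Dollar], 0)]"
  using flash_two_runs[of At Dollar 1 1] by (simp add: Flashback_def hat_def)

lemma Flashback_nonempty:
  assumes "s \<noteq> []"
  shows "Flashback s = ([At, Dollar], 1) # flash (map Ch s)"
proof -
  have "hd (map Ch s) \<noteq> At" "last (map Ch s) \<noteq> Dollar"
    using assms by (simp_all add: hd_map last_map)
  then show ?thesis
    using flash_wrap[of 1 1 "map Ch s" At Dollar] assms by (simp add: Flashback_def hat_def)
qed

lemma valid_tokens_Flashback:
  assumes "Flashback s = ([At, Dollar], 1) # ts"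
  shows "valid_tokens ts"
proof -
  have "s \<noteq> []"
  proof
    assume "s = []"
    with assms show False by (simp add: Flashback_Nil)
  qed
  then show ?thesis using assms valid_tokens_flash[of "map Ch s"] by (simp add: Flashback_nonempty)
qed

lemma set_nest: "set (nest ts) \<subseteq> (\<Union>t\<in>set ts. set (fst t))"
  by (induction ts rule: nest.induct) (auto dest: in_set_takeD in_set_dropD)

lemma Flashback_Flashback_inv:
  assumes "valid_tokens ts" "\<forall>t\<in>set ts. set (fst t) \<subseteq> range Ch"
  shows "\<exists>s. Flashback_inv (([At, Dollar], 1) # ts) = map Ch s \<and>
    Flashback s = ([At, Dollar], 1) # ts"
proof -
  have "\<forall>y\<in>set (nest ts). \<exists>x. y = Ch x" using set_nest[of ts] assms(2) by blast
  then obtain s where s: "nest ts = map Ch s" by (auto simp: ex_map_conv[symmetric])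
  have "s \<noteq> []" using s nest_ends[OF assms(1)] by auto
  then have "Flashback s = ([At, Dollar], 1) # ts"
    using s flash_nest[OF assms(1)] by (simp add: Flashback_nonempty)
  moreover have "Flashback_inv (([At, Dollar], 1) # ts) = nest ts"
    using assms(1) by (cases ts) (auto simp: Flashback_inv_def)
  ultimately show ?thesis using s by auto
qed

lemma all_range_split_last:
  fixes k :: nat
  shows "(\<forall>d. 1 \<le> d \<and> d \<le> k - 2 \<longrightarrow> P d) \<longleftrightarrow>
    (k \<ge> 3 \<longrightarrow> (\<forall>d. 1 \<le> d \<and> d \<le> k - 3 \<longrightarrow> P d) \<and> P (k - 2))"
proof (cases "k \<ge> 3")
  case True
  then have "d \<le> k - 2 \<longleftrightarrow> d \<le> k - 3 \<or> d = k - 2" for d by linarith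
  moreover have "1 \<le> k - 2" using True by linarith
  ultimately show ?thesis using True by blast
qed auto

lemma valid_tokens_map:
  assumes "inj f" "\<forall>t\<in>set ts. fst t \<noteq> []"
  shows "valid_tokens (map (\<lambda>(\<sigma>, p). (map f \<sigma>, p)) ts) \<longleftrightarrow> valid_tokens ts"
  using assms(2)
proof (induction ts rule: valid_tokens.induct)
  case (2 t)
  then show ?case using final_token_map[OF assms(1)] by (cases t) simp
next
  case (3 t t' ts)
  then show ?case using token_link_map[OF assms(1)] by (cases t; cases t') simp
qed simp

lemma valid_tokens_iff_conditions:
  fixes \<sigma> :: "nat \<Rightarrow> 'b list" and p :: "nat \<Rightarrow> nat" and k :: nat
  assumes "k \<ge> 2"
  shows "valid_tokens (map (\<lambda>d. (\<sigma> d, p d)) [1..<k]) \<longleftrightarrow>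
    (\<forall>d. 1 \<le> d \<and> d \<le> k - 2 \<longrightarrow>
        p d \<ge> 1 \<and> length (\<sigma> d) - p d \<ge> 1 \<and>
        single_run (hd (\<sigma> d)) (take (p d) (\<sigma> d)) \<and>
        single_run (last (\<sigma> d)) (drop (p d) (\<sigma> d))) \<and>
    (p (k - 1) = 0 \<and>
        ((\<exists>a. single_run a (\<sigma> (k - 1))) \<or>
         (\<exists>a c x y. a \<noteq> c \<and> single_run a x \<and> single_run c y \<and> \<sigma> (k - 1) = x @ y))) \<and>
    (k \<ge> 3 \<longrightarrow>
        (\<forall>d. 1 \<le> d \<and> d \<le> k - 3 \<longrightarrow>
            hd (\<sigma> (d + 1)) \<noteq> hd (\<sigma> d) \<and> last (\<sigma> (d + 1)) \<noteq> last (\<sigma> d)) \<and>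
        hd (\<sigma> (k - 1)) \<noteq> hd (\<sigma> (k - 2)) \<and> last (\<sigma> (k - 1)) \<noteq> last (\<sigma> (k - 2)))"
    (is "_ \<longleftrightarrow> ?C1 \<and> ?C2 \<and> ?C3")
proof -
  let ?B = "\<lambda>d. hd (\<sigma> (Suc d)) \<noteq> hd (\<sigma> d) \<and> last (\<sigma> (Suc d)) \<noteq> last (\<sigma> d)"
  have index_bound: "Suc d < k \<longleftrightarrow> d \<le> k - 2" for d using assms by linarith
  have "valid_tokens (map (\<lambda>d. (\<sigma> d, p d)) [1..<k]) \<longleftrightarrow>
      (\<forall>d. 1 \<le> d \<and> Suc d < k \<longrightarrow> token_link (\<sigma> d, p d) (\<sigma> (Suc d), p (Suc d))) \<and>
      final_token (\<sigma> (k - 1), p (k - 1))"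
    using valid_tokens_map_upt[of 1 k "\<lambda>d. (\<sigma> d, p d)"] assms by simp
  moreover have "(\<forall>d. 1 \<le> d \<and> Suc d < k \<longrightarrow> token_link (\<sigma> d, p d) (\<sigma> (Suc d), p (Suc d))) \<longleftrightarrow>
      ?C1 \<and> (\<forall>d. 1 \<le> d \<and> d \<le> k - 2 \<longrightarrow> ?B d)"
    using index_bound unfolding token_link.simps by blast
  moreover have "(\<forall>d. 1 \<le> d \<and> d \<le> k - 2 \<longrightarrow> ?B d) \<longleftrightarrow> ?C3"
  proof -
    have "k \<ge> 3 \<Longrightarrow> Suc (k - 2) = k - 1" by linarith
    then show ?thesis unfolding all_range_split_last[of k ?B] by auto
  qed
  moreover have "final_token (\<sigma> (k - 1), p (k - 1)) \<longleftrightarrow> ?C2"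
    unfolding final_token.simps ..
  ultimately show ?thesis by blast
qed

theorem theorem6p9:
  fixes \<sigma> :: "nat \<Rightarrow> 'a list" and p :: "nat \<Rightarrow> nat" and k :: nat
    and T :: "('a sym list \<times> nat) list"
  assumes k2: "k \<ge> 2"
    and nonempty: "\<forall>d. 1 \<le> d \<and> d \<le> k - 1 \<longrightarrow> \<sigma> d \<noteq> []"
    and T_def: "T = ([At, Dollar], 1) # map (\<lambda>d. (map Ch (\<sigma> d), p d)) [1..<k]"
  defines "C1 \<equiv> (\<forall>d. 1 \<le> d \<and> d \<le> k - 2 \<longrightarrow>
              p d \<ge> 1 \<and> length (\<sigma> d) - p d \<ge> 1 \<and>
              single_run (hd (\<sigma> d)) (take (p d) (\<sigma> d)) \<and>
              single_run (last (\<sigma> d)) (drop (p d) (\<sigma> d)))"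
    and "C2 \<equiv> p (k - 1) = 0 \<and>
              ((\<exists>a. single_run a (\<sigma> (k - 1))) \<or>
               (\<exists>a c x y. a \<noteq> c \<and> single_run a x \<and> single_run c y \<and> \<sigma> (k - 1) = x @ y))"
    and "C3 \<equiv> (k \<ge> 3 \<longrightarrow>
              (\<forall>d. 1 \<le> d \<and> d \<le> k - 3 \<longrightarrow>
                  hd (\<sigma> (d + 1)) \<noteq> hd (\<sigma> d) \<and> last (\<sigma> (d + 1)) \<noteq> last (\<sigma> d)) \<and>
              hd (\<sigma> (k - 1)) \<noteq> hd (\<sigma> (k - 2)) \<and> last (\<sigma> (k - 1)) \<noteq> last (\<sigma> (k - 2)))"
  shows "((\<exists>s. T = Flashback s) \<longleftrightarrow> C1 \<and> C2 \<and> C3) \<and>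
         (C1 \<and> C2 \<and> C3 \<longrightarrow> (\<exists>s. Flashback_inv T = map Ch s \<and> Flashback s = T))"
proof -
  define ts where "ts = map (\<lambda>d. (\<sigma> d, p d)) [1..<k]"
  have T: "T = ([At, Dollar], 1) # map (\<lambda>(x, q). (map Ch x, q)) ts"
    using T_def by (simp add: ts_def)
  have "valid_tokens (map (\<lambda>(x, q). (map Ch x, q)) ts) \<longleftrightarrow> valid_tokens ts"
    using nonempty by (intro valid_tokens_map) (auto simp: ts_def inj_def)
  also have "\<dots> \<longleftrightarrow> C1 \<and> C2 \<and> C3"
    unfolding ts_def C1_def C2_def C3_def by (rule valid_tokens_iff_conditions[OF k2])
  finally have valid: "valid_tokens (map (\<lambda>(x, q). (map Ch x, q)) ts) \<longleftrightarrow> C1 \<and> C2 \<and> C3" .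
  have letters: "\<forall>t\<in>set (map (\<lambda>(x, q). (map Ch x, q)) ts). set (fst t) \<subseteq> range Ch"
    by auto
  show ?thesis
    using valid valid_tokens_Flashback Flashback_Flashback_inv[OF _ letters] unfolding T by metis
qed

end
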